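(* Let $(M^{2n},J,g)$ be a Hermitian manifold, $o\in M$, and $e_1,\dots,e_n$ a basis of $T^{1,0}_oM$. Then there is a local holomorphic coordinate $(z^1,\dots,z^n)$ at $o$ such that $z(o)=0$, $e_i=\frac{\partial}{\partial z^i}\big|_o$ for all $i$, $\tilde\Gamma_{ij}^k(o)=\Gamma_{ij}^k(o)+\tfrac12\tau_{ij}^k(o)=\tfrac12(\Gamma_{ij}^k+\Gamma_{ji}^k)(o)=0$ for all $i,j,k$, and $\partial_i\tilde\Gamma_{jk}^l(o)X^iX^jX^k=\partial_i\Gamma_{jk}^l(o)X^iX^jX^k=0$ for all $l$ and all $X\in\mathbb C^n$ (summation over $i,j,k$).
   Context: A Hermitian manifold is a complex manifold (integrable $J$) with a Riemannian metric $g$ satisfying $g(JX,JY)=g(X,Y)$. The Chern connection $D$ is the unique connection with $DJ=0$, $Dg=0$ whose torsion $\tau(X,Y)=D_XY-D_YX-[X,Y]$ has vanishing $(1,1)$-part. In holomorphic coordinates, with $\partial_i=\partial/\partial z^i$, $D_{\partial_j}\partial_i=\Gamma_{ij}^k\partial_k$ defines the Chern Christoffel symbols $\Gamma_{ij}^k$, and $\tau(\partial_i,\partial_j)=\tau_{ij}^k\partial_k$, so $\tau_{ij}^k=\Gamma_{ji}^k-\Gamma_{ij}^k$; $\tilde\Gamma_{ij}^k:=\Gamma_{ij}^k+\tfrac12\tau_{ij}^k$. Summation over repeated indices. *)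

theory Defs
  imports "HOL-Analysis.Analysis"
begin

text \<open>Everything is local: a holomorphic chart of the Hermitian manifold around the
point o identifies a neighbourhood of o with an open set U of complex^'n.
The Hermitian metric is represented by its matrix h z with entries
h z $ i $ j = g(d/dz^i, d/dzbar^j) (complex bilinear extension of g).\<close>

definition ddir :: "'a::real_normed_vector \<Rightarrow> ('a \<Rightarrow> 'b::real_normed_vector) \<Rightarrow> 'a \<Rightarrow> 'b" where
  "ddir v f = (\<lambda>x. frechet_derivative f (at x) v)"

definition smooth_on :: "'a::real_normed_vector set \<Rightarrow> ('a \<Rightarrow> 'b::real_normed_vector) \<Rightarrow> bool" where
  "smooth_on S f \<longleftrightarrow>
     (\<forall>vs. continuous_on S (foldr ddir vs f) \<and> (\<forall>x\<in>S. foldr ddir vs f differentiable (at x)))"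

definition wirt :: "'n::finite \<Rightarrow> (complex^'n \<Rightarrow> complex) \<Rightarrow> complex^'n \<Rightarrow> complex" where
  "wirt j f x = (frechet_derivative f (at x) (axis j 1)
                 - \<i> * frechet_derivative f (at x) (axis j \<i>)) / 2"

definition holo_on :: "(complex^'n::finite) set \<Rightarrow> (complex^'n \<Rightarrow> complex^'m::finite) \<Rightarrow> bool" where
  "holo_on S F \<longleftrightarrow> (\<forall>z\<in>S. \<exists>A::complex^'n^'m. (F has_derivative (\<lambda>v. A *v v)) (at z))"

definition hermitian_metric_on :: "(complex^'n::finite) set \<Rightarrow> (complex^'n \<Rightarrow> complex^'n^'n) \<Rightarrow> bool" where
  "hermitian_metric_on U h \<longleftrightarrow>
     (\<forall>i j. smooth_on U (\<lambda>z. h z $ i $ j)) \<and>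
     (\<forall>z\<in>U. \<forall>i j. h z $ j $ i = cnj (h z $ i $ j)) \<and>
     (\<forall>z\<in>U. \<forall>v. v \<noteq> 0 \<longrightarrow> Re (\<Sum>i\<in>UNIV. \<Sum>j\<in>UNIV. v $ i * h z $ i $ j * cnj (v $ j)) > 0)"

text \<open>Chern Christoffel symbols: D_{d_j} d_i = Gamma_ij^k d_k,
Gamma_ij^k = (d_j h_{i lbar}) h^{lbar k}.\<close>
definition chern_Gamma :: "(complex^'n::finite \<Rightarrow> complex^'n^'n) \<Rightarrow> 'n \<Rightarrow> 'n \<Rightarrow> 'n \<Rightarrow> complex^'n \<Rightarrow> complex" where
  "chern_Gamma h i j k z = (\<Sum>l\<in>UNIV. wirt j (\<lambda>w. h w $ i $ l) z * matrix_inv (h z) $ l $ k)"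

definition chern_tau :: "(complex^'n::finite \<Rightarrow> complex^'n^'n) \<Rightarrow> 'n \<Rightarrow> 'n \<Rightarrow> 'n \<Rightarrow> complex^'n \<Rightarrow> complex" where
  "chern_tau h i j k z = chern_Gamma h j i k z - chern_Gamma h i j k z"

definition chern_Gamma_tilde :: "(complex^'n::finite \<Rightarrow> complex^'n^'n) \<Rightarrow> 'n \<Rightarrow> 'n \<Rightarrow> 'n \<Rightarrow> complex^'n \<Rightarrow> complex" where
  "chern_Gamma_tilde h i j k z = chern_Gamma h i j k z + chern_tau h i j k z / 2"

text \<open>Pull-back of the metric matrix under a holomorphic coordinate change
F (new coordinates w \<mapsto> old coordinates F w):
g'_{i jbar}(w) = sum_{k,l} d_i F^k(w) h_{k lbar}(F w) conj(d_j F^l(w)).\<close>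
definition pullback_metric :: "(complex^'n::finite \<Rightarrow> complex^'n) \<Rightarrow> (complex^'n \<Rightarrow> complex^'n^'n) \<Rightarrow> complex^'n \<Rightarrow> complex^'n^'n" where
  "pullback_metric F h w = (\<chi> i j. \<Sum>k\<in>UNIV. \<Sum>l\<in>UNIV.
      wirt i (\<lambda>u. F u $ k) w * h (F w) $ k $ l * cnj (wirt j (\<lambda>u. F u $ l) w))"

end

theory Submission
  imports Defs
begin

(* Take the cubic chart z = F(w) = p + e_i w^i + B_ij w^i w^j + C_ijm w^i w^j w^m. Under a holomorphic
   change of coordinates the Chern Christoffel symbols transform as Gamma' = T (dF)^-1, where
   T_ij^c = d_j d_i F^c + d_i F^a d_j F^m (Gamma_am^c o F) are the components of D_(d/dw^j) (d/dw^i) in the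
   old frame. The choice B_ij = -1/2 e_i^a e_j^m Gamma_am(p) makes T(0) antisymmetric in i, j, which is
   Gamma~'(0) = 0. Differentiating Gamma' = T (dF)^-1, the derivative of (dF)^-1 only meets T(0)(X, X) = 0,
   so the cubic form of dGamma'(0) is that of dT(0), and C is chosen to make the latter vanish; Gamma~' is
   the symmetrisation of Gamma' in its lower indices and has the same cubic form. The inverse function
   theorem makes F biholomorphic near 0. *)

section \<open>Wirtinger derivatives\<close>

definition clinear_part :: "(complex^'n::finite \<Rightarrow> complex) \<Rightarrow> complex^'n \<Rightarrow> complex" where
  "clinear_part L v = (L v - \<i> * L (\<i> *s v)) / 2"

lemma axis_ii: "axis j \<i> = \<i> *s (axis j 1 :: complex^'n::finite)"
  by (simp add: vec_eq_iff axis_def)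

lemma wirt_eq_clinear_part: "wirt j f x = clinear_part (frechet_derivative f (at x)) (axis j 1)"
  by (simp add: wirt_def clinear_part_def axis_ii)

lemma wirt_has_derivative: "(f has_derivative f') (at x) \<Longrightarrow> wirt j f x = clinear_part f' (axis j 1)"
  by (metis frechet_derivative_at wirt_eq_clinear_part)

lemma clinear_part_scale:
  fixes L :: "complex^'n::finite \<Rightarrow> complex"
  assumes L: "linear L"
  shows "clinear_part L (c *s v) = c * clinear_part L v"
proof -
  have "c *s v = Re c *\<^sub>R v + Im c *\<^sub>R (\<i> *s v)"
    by (simp add: vec_eq_iff complex_eq_iff)
  then have 1: "L (c *s v) = Re c *\<^sub>R L v + Im c *\<^sub>R L (\<i> *s v)"
    by (simp add: linear_add[OF L] linear_scale[OF L])
  have "\<i> *s (c *s v) = Re c *\<^sub>R (\<i> *s v) - Im c *\<^sub>R v"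
    by (simp add: vec_eq_iff complex_eq_iff)
  then have 2: "L (\<i> *s (c *s v)) = Re c *\<^sub>R L (\<i> *s v) - Im c *\<^sub>R L v"
    by (simp add: linear_diff[OF L] linear_scale[OF L])
  have "clinear_part L (c *s v) = (of_real (Re c) + \<i> * of_real (Im c)) * clinear_part L v"
    unfolding clinear_part_def 1 2 by (simp add: scaleR_conv_of_real algebra_simps)
  then show ?thesis
    by (simp only: complex_eq[symmetric])
qed

lemma linear_clinear_part:
  fixes L :: "complex^'n::finite \<Rightarrow> complex"
  assumes L: "linear L"
  shows "linear (clinear_part L)"
proof (rule linearI)
  fix u v :: "complex^'n" and r :: real
  have ii_add: "\<i> *s (u + v) = \<i> *s u + \<i> *s v"
    by (simp add: vec_eq_iff algebra_simps)
  show "clinear_part L (u + v) = clinear_part L u + clinear_part L v"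
    by (simp add: clinear_part_def ii_add linear_add[OF L] field_simps)
  have ii_scaleR: "\<i> *s (r *\<^sub>R u) = r *\<^sub>R (\<i> *s u)"
    by (simp add: vec_eq_iff complex_eq_iff)
  have "(r *\<^sub>R a - \<i> * (r *\<^sub>R b)) / 2 = r *\<^sub>R ((a - \<i> * b) / 2)" for a b :: complex
    by (simp add: scaleR_conv_of_real algebra_simps)
  then show "clinear_part L (r *\<^sub>R u) = r *\<^sub>R clinear_part L u"
    by (simp only: clinear_part_def ii_scaleR linear_scale[OF L])
qed

lemma sum_clinear_part_axis:
  fixes L :: "complex^'n::finite \<Rightarrow> complex"
  assumes L: "linear L"
  shows "(\<Sum>j\<in>UNIV. clinear_part L (axis j 1) * X $ j) = clinear_part L X"
proof -
  have "clinear_part L X = clinear_part L (\<Sum>j\<in>UNIV. X $ j *s axis j 1)"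
    by (simp only: basis_expansion)
  also have "\<dots> = (\<Sum>j\<in>UNIV. clinear_part L (X $ j *s axis j 1))"
    by (rule linear_sum[OF linear_clinear_part[OF L]])
  also have "\<dots> = (\<Sum>j\<in>UNIV. clinear_part L (axis j 1) * X $ j)"
    by (simp add: clinear_part_scale[OF L] mult.commute)
  finally show ?thesis by simp
qed

lemma sum_wirt_mult:
  assumes "f differentiable (at x)"
  shows "(\<Sum>j\<in>UNIV. wirt j f x * X $ j) = clinear_part (frechet_derivative f (at x)) X"
proof -
  have "linear (frechet_derivative f (at x))"
    using assms frechet_derivative_works has_derivative_linear by blast
  then show ?thesis
    by (simp only: wirt_eq_clinear_part sum_clinear_part_axis)
qed

lemma wirt_const [simp]: "wirt j (\<lambda>x. c) x = 0"
  by (simp add: wirt_has_derivative[OF has_derivative_const] clinear_part_def)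

lemma wirt_vec_nth: "wirt j (\<lambda>x::complex^'n::finite. x $ k) x = (if j = k then 1 else 0)"
  by (simp add: wirt_has_derivative[OF bounded_linear.has_derivative[OF bounded_linear_vec_nth has_derivative_ident]]
      clinear_part_def axis_def)

lemma wirt_add:
  assumes "f differentiable (at x)" "g differentiable (at x)"
  shows "wirt j (\<lambda>x. f x + g x) x = wirt j f x + wirt j g x"
proof -
  have D: "((\<lambda>x. f x + g x) has_derivative
      (\<lambda>v. frechet_derivative f (at x) v + frechet_derivative g (at x) v)) (at x)"
    using assms by (intro has_derivative_add) (simp_all add: frechet_derivative_works[symmetric])
  show ?thesis
    unfolding wirt_has_derivative[OF D] unfolding wirt_eq_clinear_part clinear_part_def by (simp add: field_simps)
qed

lemma wirt_mult:
  assumes "f differentiable (at x)" "g differentiable (at x)"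
  shows "wirt j (\<lambda>x. f x * g x) x = wirt j f x * g x + f x * wirt j g x"
proof -
  have D: "((\<lambda>x. f x * g x) has_derivative
      (\<lambda>v. f x * frechet_derivative g (at x) v + frechet_derivative f (at x) v * g x)) (at x)"
    using assms by (intro has_derivative_mult) (simp_all add: frechet_derivative_works[symmetric])
  show ?thesis
    unfolding wirt_has_derivative[OF D] unfolding wirt_eq_clinear_part clinear_part_def by (simp add: field_simps)
qed

lemma wirt_cmult:
  assumes "f differentiable (at x)"
  shows "wirt j (\<lambda>x. c * f x) x = c * wirt j f x"
  using wirt_mult[of "\<lambda>x. c" x f j] assms by simp

lemma wirt_sum:
  assumes "finite I" "\<And>i. i \<in> I \<Longrightarrow> f i differentiable (at x)"
  shows "wirt j (\<lambda>x. \<Sum>i\<in>I. f i x) x = (\<Sum>i\<in>I. wirt j (f i) x)"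
  using assms
proof (induction I rule: finite_induct)
  case (insert a I)
  then have "wirt j (\<lambda>x. f a x + (\<Sum>i\<in>I. f i x)) x = wirt j (f a) x + wirt j (\<lambda>x. \<Sum>i\<in>I. f i x) x"
    by (intro wirt_add) auto
  with insert show ?case by simp
qed simp

lemma wirt_transform_within_open:
  assumes "f differentiable (at x)" "open S" "x \<in> S" "\<And>y. y \<in> S \<Longrightarrow> f y = g y"
  shows "wirt j g x = wirt j f x"
  unfolding wirt_def using frechet_derivative_transform_within_open[OF assms] by simp

definition holo_at :: "(complex^'n::finite \<Rightarrow> complex) \<Rightarrow> complex^'n \<Rightarrow> bool" where
  "holo_at f x \<longleftrightarrow> f differentiable (at x) \<and>
     (\<forall>v. frechet_derivative f (at x) (\<i> *s v) = \<i> * frechet_derivative f (at x) v)"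

lemma holo_atI:
  assumes "(f has_derivative f') (at x)" "\<And>v. f' (\<i> *s v) = \<i> * f' v"
  shows "holo_at f x"
  using assms frechet_derivative_at[OF assms(1)] unfolding holo_at_def differentiable_def by auto

lemma holo_at_imp_differentiable: "holo_at f x \<Longrightarrow> f differentiable (at x)"
  by (simp add: holo_at_def)

lemma holo_at_const: "holo_at (\<lambda>x. c) x"
  by (rule holo_atI[OF has_derivative_const]) simp

lemma holo_at_vec_nth: "holo_at (\<lambda>x::complex^'n::finite. x $ k) x"
  by (rule holo_atI[OF bounded_linear.has_derivative[OF bounded_linear_vec_nth has_derivative_ident]]) simp

lemma differentiable_vec_nth [simp]: "(\<lambda>x::complex^'n::finite. x $ k) differentiable (at w)"
  using holo_at_vec_nth holo_at_imp_differentiable by blast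

lemma holo_at_add:
  assumes "holo_at f x" "holo_at g x"
  shows "holo_at (\<lambda>x. f x + g x) x"
proof -
  have "((\<lambda>x. f x + g x) has_derivative
      (\<lambda>v. frechet_derivative f (at x) v + frechet_derivative g (at x) v)) (at x)"
    using assms by (intro has_derivative_add) (simp_all add: holo_at_def frechet_derivative_works[symmetric])
  then show ?thesis
    by (rule holo_atI) (use assms in \<open>simp add: holo_at_def algebra_simps\<close>)
qed

lemma holo_at_mult:
  assumes "holo_at f x" "holo_at g x"
  shows "holo_at (\<lambda>x. f x * g x) x"
proof -
  have "((\<lambda>x. f x * g x) has_derivative
      (\<lambda>v. f x * frechet_derivative g (at x) v + frechet_derivative f (at x) v * g x)) (at x)"
    using assms by (intro has_derivative_mult) (simp_all add: holo_at_def frechet_derivative_works[symmetric])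
  then show ?thesis
    by (rule holo_atI) (use assms in \<open>simp add: holo_at_def algebra_simps\<close>)
qed

lemma holo_at_sum:
  assumes "finite I" "\<And>i. i \<in> I \<Longrightarrow> holo_at (f i) x"
  shows "holo_at (\<lambda>x. \<Sum>i\<in>I. f i x) x"
  using assms by (induction I rule: finite_induct) (simp_all add: holo_at_const holo_at_add)

lemma frechet_derivative_holo_at:
  assumes "holo_at f x"
  shows "frechet_derivative f (at x) v = (\<Sum>j\<in>UNIV. wirt j f x * v $ j)"
  using assms by (simp add: holo_at_def sum_wirt_mult clinear_part_def)

lemma wirt_cnj_holo_at:
  assumes "holo_at g x"
  shows "wirt j (\<lambda>x. cnj (g x)) x = 0"
proof -
  have "((\<lambda>x. cnj (g x)) has_derivative (\<lambda>v. cnj (frechet_derivative g (at x) v))) (at x)"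
    using assms by (intro bounded_linear.has_derivative[OF bounded_linear_cnj])
      (simp add: holo_at_def frechet_derivative_works[symmetric])
  with assms show ?thesis
    by (simp add: wirt_has_derivative clinear_part_def holo_at_def)
qed

section \<open>Matrix inverses and determinants\<close>

lemma matrix_inv_right:
  fixes A :: "'a::semiring_1^'n::finite^'n"
  assumes "invertible A"
  shows "A ** matrix_inv A = mat 1"
  using someI_ex[of "\<lambda>A'. A ** A' = mat 1 \<and> A' ** A = mat 1"] assms
  by (simp add: invertible_def matrix_inv_def)

lemma matrix_inv_left:
  fixes A :: "'a::semiring_1^'n::finite^'n"
  assumes "invertible A"
  shows "matrix_inv A ** A = mat 1"
  using someI_ex[of "\<lambda>A'. A ** A' = mat 1 \<and> A' ** A = mat 1"] assms
  by (simp add: invertible_def matrix_inv_def)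

lemma matrix_inv_cramer:
  fixes A :: "'a::field^'n::finite^'n"
  assumes "det A \<noteq> 0"
  shows "matrix_inv A $ l $ k = det (\<chi> i j. if j = l then axis k 1 $ i else A $ i $ j) / det A"
proof -
  have inv: "invertible A"
    using assms by (simp add: invertible_det_nz)
  have "A *v (\<chi> m. matrix_inv A $ m $ k) = column k (A ** matrix_inv A)"
    by (simp add: vec_eq_iff matrix_vector_mult_def matrix_matrix_mult_def column_def)
  also have "\<dots> = axis k 1"
    by (simp add: matrix_inv_right[OF inv] column_def mat_def axis_def vec_eq_iff)
  finally show ?thesis
    using cramer[OF assms] by (simp add: vec_eq_iff)
qed

lemma det_cnj:
  fixes J :: "complex^'n::finite^'n"
  shows "det (\<chi> i j. cnj (J $ i $ j)) = cnj (det J)"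
  by (simp add: det_def cnj_prod)

lemma differentiable_det:
  fixes A :: "'a::real_normed_vector \<Rightarrow> 'b::real_normed_field^'n::finite^'n"
  assumes "\<And>i j. (\<lambda>x. A x $ i $ j) differentiable (at x0)"
  shows "(\<lambda>x. det (A x)) differentiable (at x0)"
proof -
  have "(\<lambda>x. \<Prod>i\<in>UNIV. A x $ i $ p i) differentiable (at x0)" for p :: "'n \<Rightarrow> 'n"
    using has_derivative_prod[of UNIV "\<lambda>i x. A x $ i $ p i"
        "\<lambda>i. frechet_derivative (\<lambda>x. A x $ i $ p i) (at x0)" x0 UNIV]
      assms[unfolded frechet_derivative_works]
    unfolding differentiable_def by auto
  then show ?thesis
    unfolding det_def by (intro differentiable_sum differentiable_mult differentiable_const) auto
qed

lemma differentiable_matrix_inv: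
  fixes A :: "'a::real_normed_vector \<Rightarrow> 'b::real_normed_field^'n::finite^'n"
  assumes d: "\<And>i j. (\<lambda>x. A x $ i $ j) differentiable (at x0)" and nz: "det (A x0) \<noteq> 0"
  shows "(\<lambda>x. matrix_inv (A x) $ l $ k) differentiable (at x0)"
proof -
  have "continuous (at x0) (\<lambda>x. det (A x))"
    by (rule differentiable_imp_continuous_within[OF differentiable_det[OF d]])
  then obtain r where "r > 0" and r: "\<And>y. dist x0 y < r \<Longrightarrow> det (A y) \<noteq> 0"
    using continuous_at_avoid[of x0 "\<lambda>x. det (A x)" 0] nz by blast
  define g where "g x = det (\<chi> i j. if j = l then axis k 1 $ i else A x $ i $ j) / det (A x)" for x
  have "(\<lambda>x. if j = l then axis k 1 $ i else A x $ i $ j) differentiable (at x0)" for i j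
    by (cases "j = l") (simp_all add: d)
  then have "g differentiable (at x0)"
    unfolding g_def by (intro differentiable_divide differentiable_det d nz) simp_all
  then show ?thesis
    using differentiable_transform_within[of g x0 UNIV r] \<open>r > 0\<close> r
    by (auto simp: g_def matrix_inv_cramer dist_commute)
qed

section \<open>Holomorphic maps\<close>

definition holo_jacobian :: "(complex^'n::finite \<Rightarrow> complex^'m::finite) \<Rightarrow> complex^'n \<Rightarrow> complex^'n^'m" where
  "holo_jacobian F w = (\<chi> m i. wirt i (\<lambda>u. F u $ m) w)"

lemma bounded_linear_axis: "bounded_linear (\<lambda>c::complex. axis m c :: complex^'n::finite)"
proof (rule bounded_linear_intro[where K=1])
  show "axis m (x + y) = axis m x + (axis m y :: complex^'n)" for x y
    by (simp add: vec_eq_iff axis_def)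
  show "axis m (r *\<^sub>R x) = r *\<^sub>R (axis m x :: complex^'n)" for r x
    by (simp add: vec_eq_iff axis_def)
  show "norm (axis m x :: complex^'n) \<le> norm x * 1" for x
  proof -
    have "norm (axis m x :: complex^'n) \<le> (\<Sum>i\<in>UNIV. norm ((axis m x :: complex^'n) $ i))"
      unfolding norm_vec_def by (rule L2_set_le_sum) simp
    also have "\<dots> = norm x"
      by (simp add: axis_def if_distrib cong: if_cong)
    finally show ?thesis by simp
  qed
qed

lemma has_derivative_holo_jacobian:
  fixes F :: "complex^'n::finite \<Rightarrow> complex^'m::finite"
  assumes "\<And>m. holo_at (\<lambda>w. F w $ m) x"
  shows "(F has_derivative (\<lambda>v. holo_jacobian F x *v v)) (at x)"
proof -
  have F: "F = (\<lambda>w. \<Sum>m\<in>UNIV. axis m (F w $ m))"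
    by (simp add: fun_eq_iff vec_eq_iff axis_def)
  have "(\<lambda>v. holo_jacobian F x *v v) = (\<lambda>v. \<Sum>m\<in>UNIV. axis m (frechet_derivative (\<lambda>w. F w $ m) (at x) v))"
    using assms
    by (simp add: fun_eq_iff vec_eq_iff axis_def frechet_derivative_holo_at holo_jacobian_def matrix_vector_mult_def)
  moreover have "((\<lambda>w. F w $ m) has_derivative frechet_derivative (\<lambda>w. F w $ m) (at x)) (at x)" for m
    using assms holo_at_imp_differentiable frechet_derivative_works by blast
  ultimately show ?thesis
    by (subst F) (simp add: has_derivative_sum bounded_linear.has_derivative[OF bounded_linear_axis])
qed

lemma wirt_chain:
  fixes F :: "complex^'n::finite \<Rightarrow> complex^'m::finite"
  assumes F: "\<And>m. holo_at (\<lambda>w. F w $ m) x" and f: "f differentiable (at (F x))"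
  shows "wirt i (\<lambda>w. f (F w)) x = (\<Sum>m\<in>UNIV. wirt i (\<lambda>w. F w $ m) x * wirt m f (F x))"
proof -
  define A where "A = holo_jacobian F x"
  have "(F has_derivative (\<lambda>v. A *v v)) (at x)"
    unfolding A_def by (rule has_derivative_holo_jacobian[OF F])
  then have "((\<lambda>w. f (F w)) has_derivative (\<lambda>v. frechet_derivative f (at (F x)) (A *v v))) (at x)"
    using f by (rule has_derivative_compose[OF _ iffD1[OF frechet_derivative_works]])
  moreover have "A *v (\<i> *s v) = \<i> *s (A *v v)" for v
    by (simp add: vec_eq_iff matrix_vector_mult_def sum_distrib_left mult.left_commute)
  ultimately have "wirt i (\<lambda>w. f (F w)) x = clinear_part (frechet_derivative f (at (F x))) (A *v axis i 1)"
    by (simp add: wirt_has_derivative clinear_part_def)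
  also have "\<dots> = (\<Sum>m\<in>UNIV. wirt m f (F x) * (A *v axis i 1) $ m)"
    by (rule sum_wirt_mult[OF f, symmetric])
  also have "\<dots> = (\<Sum>m\<in>UNIV. wirt i (\<lambda>w. F w $ m) x * wirt m f (F x))"
    by (simp add: A_def holo_jacobian_def matrix_vector_mult_def axis_def if_distrib mult.commute cong: if_cong)
  finally show ?thesis .
qed

lemma matrix_inverse_function_theorem:
  fixes F :: "complex^'n::finite \<Rightarrow> complex^'n"
  assumes S: "open S" "x \<in> S"
    and F: "\<And>w. w \<in> S \<Longrightarrow> (F has_derivative (\<lambda>v. A w *v v)) (at w)"
    and A: "\<And>i j. continuous_on S (\<lambda>w. A w $ i $ j)"
    and inv: "invertible (A x)"
  obtains V W g where "open V" "V \<subseteq> S" "x \<in> V" "open W" "homeomorphism V W F g"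
    "\<And>y. y \<in> W \<Longrightarrow> invertible (A (g y))"
    "\<And>y. y \<in> W \<Longrightarrow> (g has_derivative (\<lambda>v. matrix_inv (A (g y)) *v v)) (at y)"
proof -
  define f' where "f' w = Blinfun (\<lambda>v. A w *v v)" for w
  have f': "blinfun_apply (f' w) = (\<lambda>v. A w *v v)" for w
    unfolding f'_def by (rule bounded_linear_Blinfun_apply) simp
  have "continuous_on S (\<lambda>w. (A w *v j) \<bullet> i)" for i j
    unfolding matrix_vector_mult_def by (intro continuous_intros A)
  then have "continuous_on S f'"
    unfolding continuous_on_eq_continuous_within
    by (auto intro!: continuous_blinfun_componentwiseI simp: f')
  moreover have "blinfun_apply (Blinfun (\<lambda>v. matrix_inv (A x) *v v) o\<^sub>L f' x) = id"
    by (simp add: fun_eq_iff f' bounded_linear_Blinfun_apply matrix_vector_mul_assoc matrix_inv_left[OF inv])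
  ultimately obtain V W g g' where V: "open V" "V \<subseteq> S" "x \<in> V" "open W" "homeomorphism V W F g"
    and g: "\<And>y. y \<in> W \<Longrightarrow> (g has_derivative (g' y)) (at y)"
    and g': "\<And>y. y \<in> W \<Longrightarrow> g' y = inv (blinfun_apply (f' (g y)))"
    and bij: "\<And>y. y \<in> W \<Longrightarrow> bij (blinfun_apply (f' (g y)))"
    using inverse_function_theorem[OF S(1) _ _ S(2), of F f'] F f' blinfun_eqI
    by (metis (no_types, lifting) id_apply id_blinfun.rep_eq)
  have Ainv: "invertible (A (g y))" if "y \<in> W" for y
    using bij[OF that] by (simp add: f' invertible_eq_bij)
  have "g' y = (\<lambda>v. matrix_inv (A (g y)) *v v)" if "y \<in> W" for y
    unfolding g'[OF that] f'
    by (rule inv_unique_comp) (auto simp: fun_eq_iff matrix_vector_mul_assoc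
        matrix_inv_left[OF Ainv[OF that]] matrix_inv_right[OF Ainv[OF that]])
  with g have "(g has_derivative (\<lambda>v. matrix_inv (A (g y)) *v v)) (at y)" if "y \<in> W" for y
    using that by metis
  with V Ainv that show ?thesis
    by blast
qed

lemma holo_inverse_function_theorem:
  fixes F :: "complex^'n::finite \<Rightarrow> complex^'n"
  assumes "open S" "x \<in> S"
    and F: "\<And>w. w \<in> S \<Longrightarrow> (F has_derivative (\<lambda>v. A w *v v)) (at w)"
    and "\<And>i j. continuous_on S (\<lambda>w. A w $ i $ j)"
    and "invertible (A x)"
  obtains V W where "open V" "open W" "x \<in> V" "V \<subseteq> S" "bij_betw F V W"
    "holo_on V F" "holo_on W (inv_into V F)" "\<And>w. w \<in> V \<Longrightarrow> invertible (A w)"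
proof -
  obtain V W g where V: "open V" "V \<subseteq> S" "x \<in> V" "open W" and hom: "homeomorphism V W F g"
    and Ainv: "\<And>y. y \<in> W \<Longrightarrow> invertible (A (g y))"
    and g: "\<And>y. y \<in> W \<Longrightarrow> (g has_derivative (\<lambda>v. matrix_inv (A (g y)) *v v)) (at y)"
    using matrix_inverse_function_theorem[OF assms] by metis
  have gF: "\<And>w. w \<in> V \<Longrightarrow> g (F w) = w" and Fg: "\<And>y. y \<in> W \<Longrightarrow> F (g y) = y"
    and FV: "F ` V = W" and gW: "g ` W = V"
    using hom by (auto simp: homeomorphism_def)
  have inj: "inj_on F V"
    by (metis gF inj_on_inverseI)
  have "(inv_into V F has_derivative (\<lambda>v. matrix_inv (A (g y)) *v v)) (at y)" if y: "y \<in> W" for y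
  proof (rule has_derivative_transform_within_open[OF g[OF y] \<open>open W\<close> y])
    show "g z = inv_into V F z" if "z \<in> W" for z
      using that gW Fg by (intro inv_into_f_eq[OF inj, symmetric]) auto
  qed
  then have "holo_on W (inv_into V F)"
    unfolding holo_on_def by blast
  moreover have "holo_on V F"
    unfolding holo_on_def using F V by blast
  moreover have "bij_betw F V W"
    using inj FV by (simp add: bij_betw_def)
  moreover have "invertible (A w)" if "w \<in> V" for w
    using Ainv[of "F w"] that FV gF by auto
  ultimately show ?thesis
    using that V by blast
qed

section \<open>The Chern connection of a pulled-back metric\<close>

lemma hermitian_metric_invertible:
  assumes h: "hermitian_metric_on U h" and z: "z \<in> U"
  shows "invertible (h z)"
proof -
  have pos: "Re (\<Sum>i\<in>UNIV. \<Sum>j\<in>UNIV. v $ i * h z $ i $ j * cnj (v $ j)) > 0" if "v \<noteq> 0" for v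
    using h z that unfolding hermitian_metric_on_def by blast
  have "x = 0" if hx: "h z *v x = 0" for x
  proof (rule ccontr)
    define v where "v = (\<chi> i. cnj (x $ i))"
    assume "x \<noteq> 0"
    then have "v \<noteq> 0"
      by (auto simp: v_def vec_eq_iff)
    moreover have "(\<Sum>i\<in>UNIV. \<Sum>j\<in>UNIV. v $ i * h z $ i $ j * cnj (v $ j))
        = (\<Sum>i\<in>UNIV. cnj (x $ i) * (h z *v x) $ i)"
      by (simp add: v_def matrix_vector_mult_def sum_distrib_left mult.assoc)
    ultimately show False
      using pos[of v] by (simp add: hx del: Re_sum)
  qed
  then show ?thesis
    using matrix_left_invertible_ker invertible_left_inverse by blast
qed

lemma hermitian_metric_differentiable:
  assumes "hermitian_metric_on U h" "z \<in> U"
  shows "(\<lambda>z. h z $ a $ b) differentiable (at z)"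
proof -
  have "smooth_on U (\<lambda>z. h z $ a $ b)"
    using assms(1) by (simp add: hermitian_metric_on_def)
  then show ?thesis
    using assms(2) unfolding smooth_on_def by (metis foldr.simps(1) id_apply)
qed

lemma wirt_hermitian_metric_differentiable:
  assumes "hermitian_metric_on U h" "z \<in> U"
  shows "wirt m (\<lambda>z. h z $ a $ b) differentiable (at z)"
proof -
  have "smooth_on U (\<lambda>z. h z $ a $ b)"
    using assms(1) by (simp add: hermitian_metric_on_def)
  then have "ddir v (\<lambda>z. h z $ a $ b) differentiable (at z)" for v
    using assms(2) unfolding smooth_on_def
    by (metis (no_types, lifting) comp_apply foldr.simps(1,2) id_apply)
  moreover have "wirt m (\<lambda>z. h z $ a $ b)
      = (\<lambda>z. (ddir (axis m 1) (\<lambda>z. h z $ a $ b) z - \<i> * ddir (axis m \<i>) (\<lambda>z. h z $ a $ b) z) / 2)"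
    by (simp add: fun_eq_iff wirt_def ddir_def)
  ultimately show ?thesis
    by (simp add: differentiable_divide differentiable_diff differentiable_mult)
qed

lemma chern_Gamma_differentiable:
  assumes h: "hermitian_metric_on U h" and z: "z \<in> U"
  shows "chern_Gamma h a m c differentiable (at z)"
proof -
  have "(\<lambda>z. matrix_inv (h z) $ l $ c) differentiable (at z)" for l
    using h z
    by (intro differentiable_matrix_inv hermitian_metric_differentiable)
      (simp_all add: invertible_det_nz[symmetric] hermitian_metric_invertible)
  then show ?thesis
    unfolding chern_Gamma_def[abs_def]
    by (intro differentiable_sum ballI differentiable_mult wirt_hermitian_metric_differentiable[OF h z]) auto
qed

lemma wirt_hermitian_metric:
  assumes "hermitian_metric_on U h" "z \<in> U"
  shows "wirt m (\<lambda>z. h z $ a $ b) z = (\<Sum>c\<in>UNIV. chern_Gamma h a m c z * h z $ c $ b)"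
proof -
  have "(\<Sum>c\<in>UNIV. chern_Gamma h a m c z * h z $ c $ b)
      = (\<Sum>c\<in>UNIV. \<Sum>l\<in>UNIV. wirt m (\<lambda>w. h w $ a $ l) z * (matrix_inv (h z) $ l $ c * h z $ c $ b))"
    unfolding chern_Gamma_def by (simp only: sum_distrib_right mult.assoc)
  also have "\<dots> = (\<Sum>l\<in>UNIV. \<Sum>c\<in>UNIV. wirt m (\<lambda>w. h w $ a $ l) z * (matrix_inv (h z) $ l $ c * h z $ c $ b))"
    by (rule sum.swap)
  also have "\<dots> = (\<Sum>l\<in>UNIV. wirt m (\<lambda>w. h w $ a $ l) z * (matrix_inv (h z) ** h z) $ l $ b)"
    unfolding matrix_matrix_mult_def by (simp only: sum_distrib_left vec_lambda_beta)
  also have "\<dots> = wirt m (\<lambda>z. h z $ a $ b) z"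
    using matrix_inv_left[OF hermitian_metric_invertible[OF assms]]
    by (simp add: mat_def if_distrib cong: if_cong)
  finally show ?thesis
    by (rule sym)
qed

definition holo2_at :: "(complex^'n::finite \<Rightarrow> complex^'m::finite) \<Rightarrow> complex^'n \<Rightarrow> bool" where
  "holo2_at F w \<longleftrightarrow> (\<forall>k. holo_at (\<lambda>u. F u $ k) w) \<and> (\<forall>k i. holo_at (\<lambda>u. holo_jacobian F u $ k $ i) w)"

(* For new coordinates w given by z = F w: the components, in the old frame d/dz^c, of the Chern
   derivative D_(d/dw^j) (d/dw^i). *)
definition pushed_Gamma ::
    "(complex^'n::finite \<Rightarrow> complex^'n) \<Rightarrow> (complex^'n \<Rightarrow> complex^'n^'n) \<Rightarrow> 'n \<Rightarrow> 'n \<Rightarrow> 'n \<Rightarrow> complex^'n \<Rightarrow> complex" where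
  "pushed_Gamma F h i j c w = wirt j (\<lambda>u. holo_jacobian F u $ c $ i) w
     + (\<Sum>a\<in>UNIV. \<Sum>m\<in>UNIV. holo_jacobian F w $ a $ i * holo_jacobian F w $ m $ j * chern_Gamma h a m c (F w))"

lemma pullback_metric_eq:
  "pullback_metric F h w $ i $ l
     = (\<Sum>b\<in>UNIV. (\<Sum>a\<in>UNIV. holo_jacobian F w $ a $ i * h (F w) $ a $ b) * cnj (holo_jacobian F w $ b $ l))"
proof -
  have "pullback_metric F h w $ i $ l
      = (\<Sum>a\<in>UNIV. \<Sum>b\<in>UNIV. holo_jacobian F w $ a $ i * h (F w) $ a $ b * cnj (holo_jacobian F w $ b $ l))"
    by (simp add: pullback_metric_def holo_jacobian_def)
  also have "\<dots> = (\<Sum>b\<in>UNIV. \<Sum>a\<in>UNIV. holo_jacobian F w $ a $ i * h (F w) $ a $ b * cnj (holo_jacobian F w $ b $ l))"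
    by (rule sum.swap)
  finally show ?thesis
    by (simp only: sum_distrib_right)
qed

lemma wirt_hermitian_metric_comp:
  assumes h: "hermitian_metric_on U h" and Fw: "F w \<in> U" and F: "\<And>k. holo_at (\<lambda>u. F u $ k) w"
  shows "wirt j (\<lambda>u. h (F u) $ a $ b) w
     = (\<Sum>c\<in>UNIV. (\<Sum>m\<in>UNIV. holo_jacobian F w $ m $ j * chern_Gamma h a m c (F w)) * h (F w) $ c $ b)"
proof -
  have "wirt j (\<lambda>u. h (F u) $ a $ b) w
      = (\<Sum>m\<in>UNIV. holo_jacobian F w $ m $ j * (\<Sum>c\<in>UNIV. chern_Gamma h a m c (F w) * h (F w) $ c $ b))"
    using wirt_chain[of F w "\<lambda>z. h z $ a $ b" j, OF F hermitian_metric_differentiable[OF h Fw]]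
    by (simp add: holo_jacobian_def wirt_hermitian_metric[OF h Fw])
  also have "\<dots> = (\<Sum>c\<in>UNIV. (\<Sum>m\<in>UNIV. holo_jacobian F w $ m $ j * chern_Gamma h a m c (F w)) * h (F w) $ c $ b)"
    by (simp only: sum_distrib_left sum_distrib_right mult.assoc) (rule sum.swap)
  finally show ?thesis .
qed

lemma wirt_pullback_metric:
  assumes h: "hermitian_metric_on U h" and Fw: "F w \<in> U" and F: "holo2_at F w"
  shows "wirt j (\<lambda>u. pullback_metric F h u $ i $ l) w
     = (\<Sum>b\<in>UNIV. (\<Sum>c\<in>UNIV. pushed_Gamma F h i j c w * h (F w) $ c $ b) * cnj (holo_jacobian F w $ b $ l))"
proof -
  define J where "J = holo_jacobian F"
  define Y where "Y a c = (\<Sum>m\<in>UNIV. J w $ m $ j * chern_Gamma h a m c (F w))" for a c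
  have FJ: "\<And>k. holo_at (\<lambda>u. F u $ k) w" "\<And>k i. holo_at (\<lambda>u. J u $ k $ i) w"
    using F by (simp_all add: holo2_at_def J_def)
  have "F differentiable (at w)"
    using has_derivative_holo_jacobian[OF FJ(1)] by (auto simp: differentiable_def)
  then have hF: "(\<lambda>u. h (F u) $ a $ b) differentiable (at w)" for a b
    using differentiable_chain_at[of F w "\<lambda>z. h z $ a $ b"] hermitian_metric_differentiable[OF h Fw]
    by (simp add: o_def)
  have cJ: "(\<lambda>u. cnj (J u $ k $ i)) differentiable (at w)" for k i
    using differentiable_compose[OF bounded_linear_imp_differentiable[OF bounded_linear_cnj]
        holo_at_imp_differentiable[OF FJ(2)]] by blast
  have "wirt j (\<lambda>u. pullback_metric F h u $ i $ l) w
      = (\<Sum>b\<in>UNIV. (\<Sum>a\<in>UNIV. wirt j (\<lambda>u. J u $ a $ i) w * h (F w) $ a $ b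
          + J w $ a $ i * (\<Sum>c\<in>UNIV. Y a c * h (F w) $ c $ b)) * cnj (J w $ b $ l))"
    unfolding pullback_metric_eq J_def[symmetric] Y_def
    using FJ hF cJ wirt_hermitian_metric_comp[OF h Fw FJ(1)]
    by (simp add: wirt_sum wirt_mult holo_at_imp_differentiable wirt_cnj_holo_at J_def)
  moreover have "(\<Sum>a\<in>UNIV. J w $ a $ i * (\<Sum>c\<in>UNIV. Y a c * h (F w) $ c $ b))
      = (\<Sum>c\<in>UNIV. (\<Sum>a\<in>UNIV. J w $ a $ i * Y a c) * h (F w) $ c $ b)" for b
    unfolding Y_def by (simp only: sum_distrib_left sum_distrib_right mult.assoc) (rule sum.swap)
  ultimately show ?thesis
    by (simp add: pushed_Gamma_def J_def Y_def sum.distrib distrib_right sum_distrib_left mult.assoc)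
qed

lemma chern_Gamma_pullback:
  assumes h: "hermitian_metric_on U h" and Fw: "F w \<in> U" and F: "holo2_at F w"
    and inv: "invertible (holo_jacobian F w)"
  shows "chern_Gamma (pullback_metric F h) i j k w
     = (\<Sum>c\<in>UNIV. pushed_Gamma F h i j c w * matrix_inv (holo_jacobian F w) $ k $ c)"
proof -
  define A where "A = holo_jacobian F w"
  define H where "H = h (F w)"
  define Ac where "Ac = (\<chi> b l. cnj (A $ b $ l))"
  define K where "K = transpose (matrix_inv A)"
  define M where "M = matrix_inv (pullback_metric F h w)"
  define v where "v = (\<chi> c. pushed_Gamma F h i j c w)"
  have G: "pullback_metric F h w = (transpose A ** H) ** Ac"
    by (simp add: vec_eq_iff pullback_metric_eq matrix_matrix_mult_def A_def H_def Ac_def transpose_def)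
  have "det (pullback_metric F h w) \<noteq> 0"
    using inv hermitian_metric_invertible[OF h Fw]
    by (simp add: G det_mul det_transpose Ac_def det_cnj A_def H_def invertible_det_nz)
  then have GM: "pullback_metric F h w ** M = mat 1"
    unfolding M_def by (simp add: matrix_inv_right invertible_det_nz)
  have "K ** transpose A = mat 1"
    using matrix_inv_right[OF inv] by (simp add: K_def A_def flip: matrix_transpose_mul)
  then have HAc: "H ** Ac = K ** pullback_metric F h w"
    by (simp add: G matrix_mul_assoc)
  have "wirt j (\<lambda>u. pullback_metric F h u $ i $ l) w = ((v v* H) v* Ac) $ l" for l
    unfolding wirt_pullback_metric[OF h Fw F]
    by (simp add: vector_matrix_mult_def v_def Ac_def A_def H_def)
  then have "chern_Gamma (pullback_metric F h) i j k w = (((v v* H) v* Ac) v* M) $ k"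
    unfolding chern_Gamma_def by (simp add: vector_matrix_mult_def M_def mult.commute)
  also have "\<dots> = (v v* K) $ k"
    by (simp add: vector_matrix_mul_assoc HAc matrix_mul_assoc[symmetric] GM)
  also have "\<dots> = (\<Sum>c\<in>UNIV. pushed_Gamma F h i j c w * matrix_inv (holo_jacobian F w) $ k $ c)"
    by (simp add: vector_matrix_mult_def v_def K_def A_def transpose_def mult.commute)
  finally show ?thesis .
qed

lemma chern_Gamma_tilde_pullback_eq_0:
  assumes "hermitian_metric_on U h" "F w \<in> U" "holo2_at F w" "invertible (holo_jacobian F w)"
    and "\<And>c. pushed_Gamma F h i j c w + pushed_Gamma F h j i c w = 0"
  shows "chern_Gamma_tilde (pullback_metric F h) i j k w = 0"
proof -
  have "2 * chern_Gamma_tilde (pullback_metric F h) i j k w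
      = chern_Gamma (pullback_metric F h) i j k w + chern_Gamma (pullback_metric F h) j i k w"
    by (simp add: chern_Gamma_tilde_def chern_tau_def field_simps)
  also have "\<dots> = (\<Sum>c\<in>UNIV. (pushed_Gamma F h i j c w + pushed_Gamma F h j i c w)
      * matrix_inv (holo_jacobian F w) $ k $ c)"
    by (simp add: chern_Gamma_pullback[OF assms(1-4)] distrib_right sum.distrib)
  finally show ?thesis
    by (simp add: assms(5))
qed

lemma wirt_chern_Gamma_pullback:
  assumes h: "hermitian_metric_on U h" and N: "open N" "w \<in> N"
    and FN: "\<And>u. u \<in> N \<Longrightarrow> F u \<in> U \<and> holo2_at F u \<and> invertible (holo_jacobian F u)"
    and d: "\<And>j k c. pushed_Gamma F h j k c differentiable (at w)"
  shows "chern_Gamma (pullback_metric F h) j k l differentiable (at w)"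
    and "wirt i (chern_Gamma (pullback_metric F h) j k l) w
      = (\<Sum>c\<in>UNIV. wirt i (\<lambda>u. matrix_inv (holo_jacobian F u) $ l $ c) w * pushed_Gamma F h j k c w
          + matrix_inv (holo_jacobian F w) $ l $ c * wirt i (pushed_Gamma F h j k c) w)"
proof -
  define K where "K c = (\<lambda>u. matrix_inv (holo_jacobian F u) $ l $ c)" for c
  define Q where "Q u = (\<Sum>c\<in>UNIV. pushed_Gamma F h j k c u * K c u)" for u
  have "holo2_at F w" "invertible (holo_jacobian F w)"
    using FN N(2) by auto
  then have Kd: "K c differentiable (at w)" for c
    unfolding K_def
    by (intro differentiable_matrix_inv) (simp_all add: holo2_at_def holo_at_imp_differentiable invertible_det_nz)
  have Qd: "Q differentiable (at w)"
    unfolding Q_def by (intro differentiable_sum ballI differentiable_mult d Kd) simp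
  have GQ: "Q u = chern_Gamma (pullback_metric F h) j k l u" if "u \<in> N" for u
    using FN[OF that] chern_Gamma_pullback[OF h] by (simp add: Q_def K_def)
  have "(chern_Gamma (pullback_metric F h) j k l has_derivative frechet_derivative Q (at w)) (at w)"
    by (rule has_derivative_transform_within_open[OF Qd[unfolded frechet_derivative_works] N GQ])
  then show "chern_Gamma (pullback_metric F h) j k l differentiable (at w)"
    unfolding differentiable_def by blast
  have "wirt i (chern_Gamma (pullback_metric F h) j k l) w = wirt i Q w"
    by (rule wirt_transform_within_open[OF Qd N GQ])
  also have "\<dots> = (\<Sum>c\<in>UNIV. wirt i (K c) w * pushed_Gamma F h j k c w + K c w * wirt i (pushed_Gamma F h j k c) w)"
    unfolding Q_def using d Kd by (simp add: wirt_sum wirt_mult mult.commute)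
  finally show "wirt i (chern_Gamma (pullback_metric F h) j k l) w
      = (\<Sum>c\<in>UNIV. wirt i (\<lambda>u. matrix_inv (holo_jacobian F u) $ l $ c) w * pushed_Gamma F h j k c w
          + matrix_inv (holo_jacobian F w) $ l $ c * wirt i (pushed_Gamma F h j k c) w)"
    by (simp only: K_def)
qed

section \<open>Cubic forms\<close>

definition cubic_form :: "('n::finite \<Rightarrow> 'n \<Rightarrow> 'n \<Rightarrow> 'a::comm_ring) \<Rightarrow> 'a^'n \<Rightarrow> 'a" where
  "cubic_form T X = (\<Sum>i\<in>UNIV. \<Sum>j\<in>UNIV. \<Sum>k\<in>UNIV. T i j k * X $ i * X $ j * X $ k)"

lemma cubic_form_add: "cubic_form (\<lambda>i j k. S i j k + T i j k) X = cubic_form S X + cubic_form T X"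
  by (simp add: cubic_form_def distrib_right sum.distrib)

lemma cubic_form_cmult: "cubic_form (\<lambda>i j k. c * T i j k) X = c * cubic_form T X"
  by (simp add: cubic_form_def sum_distrib_left mult.assoc)

lemma cubic_form_sum: "cubic_form (\<lambda>i j k. \<Sum>c\<in>C. T c i j k) X = (\<Sum>c\<in>C. cubic_form (T c) X)"
  unfolding cubic_form_def by (simp only: sum_distrib_right sum.swap[where A=UNIV and B=C])

lemma cubic_form_swap12: "cubic_form (\<lambda>i j k. T j i k) X = cubic_form T X"
  unfolding cubic_form_def by (subst sum.swap) (simp add: mult_ac)

lemma cubic_form_swap23: "cubic_form (\<lambda>i j k. T i k j) X = cubic_form T X"
  unfolding cubic_form_def by (subst (2) sum.swap) (simp add: mult_ac)

lemma cubic_form_rotate: "cubic_form (\<lambda>i j k. T j k i) X = cubic_form T X"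
  using cubic_form_swap12[of "\<lambda>i j k. T i k j"] cubic_form_swap23[of T] by simp

lemma cubic_form_rotate': "cubic_form (\<lambda>i j k. T k i j) X = cubic_form T X"
  using cubic_form_swap23[of "\<lambda>i j k. T j i k"] cubic_form_swap12[of T] by simp

lemma cubic_form_swap13: "cubic_form (\<lambda>i j k. T k j i) X = cubic_form T X"
  using cubic_form_swap12[of "\<lambda>i j k. T k i j"] cubic_form_rotate'[of T] by simp

lemma cubic_form_mult_quadratic:
  "cubic_form (\<lambda>i j k. a i * b j k) X
     = (\<Sum>i\<in>UNIV. a i * X $ i) * (\<Sum>j\<in>UNIV. \<Sum>k\<in>UNIV. b j k * X $ j * X $ k)"
proof -
  have "(\<Sum>i\<in>UNIV. a i * X $ i) * (\<Sum>j\<in>UNIV. \<Sum>k\<in>UNIV. b j k * X $ j * X $ k)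
      = (\<Sum>i\<in>UNIV. a i * X $ i * (\<Sum>j\<in>UNIV. \<Sum>k\<in>UNIV. b j k * X $ j * X $ k))"
    by (rule sum_distrib_right)
  then show ?thesis
    unfolding cubic_form_def by (simp add: sum_distrib_left mult_ac)
qed

lemma quadratic_form_antisym:
  fixes b :: "'n::finite \<Rightarrow> 'n \<Rightarrow> 'a::field_char_0"
  assumes "\<And>j k. b j k + b k j = 0"
  shows "(\<Sum>j\<in>UNIV. \<Sum>k\<in>UNIV. b j k * X $ j * X $ k) = 0"
proof -
  define s where "s = (\<Sum>j\<in>UNIV. \<Sum>k\<in>UNIV. b j k * X $ j * X $ k)"
  have "s = (\<Sum>j\<in>UNIV. \<Sum>k\<in>UNIV. b k j * X $ k * X $ j)"
    unfolding s_def by (rule sum.swap)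
  moreover have "(b j k + b k j) * X $ j * X $ k = b j k * X $ j * X $ k + b k j * X $ k * X $ j" for j k
    by (simp add: algebra_simps)
  then have "(\<Sum>j\<in>UNIV. \<Sum>k\<in>UNIV. (b j k + b k j) * X $ j * X $ k)
      = s + (\<Sum>j\<in>UNIV. \<Sum>k\<in>UNIV. b k j * X $ k * X $ j)"
    by (simp only: s_def sum.distrib)
  ultimately have "s + s = 0"
    by (simp add: assms)
  then show ?thesis
    by (simp add: s_def)
qed

lemma cubic_form_wirt_chern_Gamma_tilde:
  assumes "\<And>j k. chern_Gamma g j k l differentiable (at w)"
  shows "cubic_form (\<lambda>i j k. wirt i (chern_Gamma_tilde g j k l) w) X
       = cubic_form (\<lambda>i j k. wirt i (chern_Gamma g j k l) w) X"
proof -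
  have "chern_Gamma_tilde g j k l = (\<lambda>z. 1/2 * (chern_Gamma g j k l z + chern_Gamma g k j l z))" for j k
    by (simp add: fun_eq_iff chern_Gamma_tilde_def chern_tau_def field_simps)
  then have "wirt i (chern_Gamma_tilde g j k l) w
      = 1/2 * (wirt i (chern_Gamma g j k l) w + wirt i (chern_Gamma g k j l) w)" for i j k
    by (simp only: wirt_cmult[OF differentiable_add[OF assms assms]] wirt_add[OF assms assms])
  then have "cubic_form (\<lambda>i j k. wirt i (chern_Gamma_tilde g j k l) w) X
      = 1/2 * cubic_form (\<lambda>i j k. wirt i (chern_Gamma g j k l) w) X
        + 1/2 * cubic_form (\<lambda>i j k. wirt i (chern_Gamma g k j l) w) X"
    by (simp only: distrib_left cubic_form_add cubic_form_cmult)
  then show ?thesis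
    using cubic_form_swap23[of "\<lambda>i j k. wirt i (chern_Gamma g j k l) w"] by simp
qed

lemma cubic_form_wirt_chern_Gamma_pullback:
  assumes h: "hermitian_metric_on U h" and N: "open N" "w \<in> N"
    and FN: "\<And>u. u \<in> N \<Longrightarrow> F u \<in> U \<and> holo2_at F u \<and> invertible (holo_jacobian F u)"
    and d: "\<And>j k c. pushed_Gamma F h j k c differentiable (at w)"
    and antisym: "\<And>j k c. pushed_Gamma F h j k c w + pushed_Gamma F h k j c w = 0"
    and cubic: "\<And>c. cubic_form (\<lambda>i j k. wirt i (pushed_Gamma F h j k c) w) X = 0"
  shows "cubic_form (\<lambda>i j k. wirt i (chern_Gamma (pullback_metric F h) j k l) w) X = 0"
    and "cubic_form (\<lambda>i j k. wirt i (chern_Gamma_tilde (pullback_metric F h) j k l) w) X = 0"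
proof -
  have "cubic_form (\<lambda>i j k. wirt i (chern_Gamma (pullback_metric F h) j k l) w) X
      = (\<Sum>c\<in>UNIV. (\<Sum>i\<in>UNIV. wirt i (\<lambda>u. matrix_inv (holo_jacobian F u) $ l $ c) w * X $ i)
            * (\<Sum>j\<in>UNIV. \<Sum>k\<in>UNIV. pushed_Gamma F h j k c w * X $ j * X $ k)
          + matrix_inv (holo_jacobian F w) $ l $ c * cubic_form (\<lambda>i j k. wirt i (pushed_Gamma F h j k c) w) X)"
    by (simp only: wirt_chern_Gamma_pullback(2)[OF h N FN d]
        cubic_form_sum cubic_form_add cubic_form_cmult cubic_form_mult_quadratic)
  also have "\<dots> = 0"
    using quadratic_form_antisym[of "\<lambda>j k. pushed_Gamma F h j k _ w", OF antisym] by (simp add: cubic)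
  finally show cub: "cubic_form (\<lambda>i j k. wirt i (chern_Gamma (pullback_metric F h) j k l) w) X = 0" .
  then show "cubic_form (\<lambda>i j k. wirt i (chern_Gamma_tilde (pullback_metric F h) j k l) w) X = 0"
    by (simp only: cubic_form_wirt_chern_Gamma_tilde wirt_chern_Gamma_pullback(1)[OF h N FN d])
qed

section \<open>The normal coordinate chart\<close>

lemma if_zero_mult: "(if P then a else 0) * b = (if P then a * b else (0::'a::mult_zero))"
  by simp

lemma mult_if_zero: "b * (if P then a else 0) = (if P then b * a else (0::'a::mult_zero))"
  by simp

lemma sum_if_zero: "(\<Sum>x\<in>A. if P then f x else 0) = (if P then sum f A else 0)"
  by simp

locale hermitian_chart =
  fixes U :: "(complex^'n::finite) set"
    and h :: "complex^'n \<Rightarrow> complex^'n^'n"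
    and p :: "complex^'n"
    and e :: "'n \<Rightarrow> complex^'n"
  assumes open_U: "open U" and p_in_U: "p \<in> U"
    and metric: "hermitian_metric_on U h"
    and frame: "invertible (\<chi> k i. e i $ k)"
begin

definition quad_coeff :: "'n \<Rightarrow> 'n \<Rightarrow> 'n \<Rightarrow> complex" where
  "quad_coeff i j c = -(1/2) * (\<Sum>a\<in>UNIV. \<Sum>m\<in>UNIV. e i $ a * e j $ m * chern_Gamma h a m c p)"

(* quad_coeff makes pushed_Gamma antisymmetric at 0; cubic_coeff solves
   6 C + 2 B e Gamma + 2 e B Gamma + e e e dGamma = 0, which is the vanishing of the cubic form of the
   derivative of pushed_Gamma at 0 (cubic_form_wirt_pushed_Gamma_chart). *)
definition cubic_coeff :: "'n \<Rightarrow> 'n \<Rightarrow> 'n \<Rightarrow> 'n \<Rightarrow> complex" where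
  "cubic_coeff i j m c = -(1/6) *
     ((\<Sum>a\<in>UNIV. \<Sum>b\<in>UNIV. (2 * quad_coeff i j a * e m $ b + 2 * e m $ a * quad_coeff i j b) * chern_Gamma h a b c p)
      + (\<Sum>a\<in>UNIV. \<Sum>b\<in>UNIV. \<Sum>q\<in>UNIV. e i $ a * e j $ b * e m $ q * wirt q (chern_Gamma h a b c) p))"

definition chart :: "complex^'n \<Rightarrow> complex^'n" where
  "chart w = (\<chi> k. p $ k + (\<Sum>i\<in>UNIV. w $ i * e i $ k)
     + (\<Sum>i\<in>UNIV. \<Sum>j\<in>UNIV. w $ i * w $ j * quad_coeff i j k)
     + (\<Sum>i\<in>UNIV. \<Sum>j\<in>UNIV. \<Sum>m\<in>UNIV. w $ i * w $ j * w $ m * cubic_coeff i j m k))"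

definition cubic_coeff_deriv :: "'n \<Rightarrow> 'n \<Rightarrow> 'n \<Rightarrow> 'n \<Rightarrow> complex" where
  "cubic_coeff_deriv i j m k = cubic_coeff i j m k + cubic_coeff j i m k + cubic_coeff j m i k"

definition chart_d1 :: "complex^'n \<Rightarrow> 'n \<Rightarrow> 'n \<Rightarrow> complex" where
  "chart_d1 w i k = e i $ k + (\<Sum>j\<in>UNIV. w $ j * (quad_coeff i j k + quad_coeff j i k))
     + (\<Sum>j\<in>UNIV. \<Sum>m\<in>UNIV. w $ j * w $ m * cubic_coeff_deriv i j m k)"

definition chart_d2 :: "complex^'n \<Rightarrow> 'n \<Rightarrow> 'n \<Rightarrow> 'n \<Rightarrow> complex" where
  "chart_d2 w i j k = quad_coeff i j k + quad_coeff j i k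
     + (\<Sum>m\<in>UNIV. w $ m * (cubic_coeff_deriv i j m k + cubic_coeff_deriv i m j k))"

lemma holo_at_chart: "holo_at (\<lambda>w. chart w $ k) w"
  unfolding chart_def vec_lambda_beta
  by (intro holo_at_add holo_at_sum holo_at_mult holo_at_const holo_at_vec_nth finite)

lemma holo_at_chart_d1: "holo_at (\<lambda>w. chart_d1 w i k) w"
  unfolding chart_d1_def
  by (intro holo_at_add holo_at_sum holo_at_mult holo_at_const holo_at_vec_nth finite)

lemma holo_at_chart_d2: "holo_at (\<lambda>w. chart_d2 w i j k) w"
  unfolding chart_d2_def
  by (intro holo_at_add holo_at_sum holo_at_mult holo_at_const holo_at_vec_nth finite)

lemma wirt_chart: "wirt i (\<lambda>w. chart w $ k) w = chart_d1 w i k"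
  unfolding chart_def vec_lambda_beta
  by (simp add: wirt_add wirt_sum wirt_mult wirt_vec_nth)
    (simp add: chart_d1_def cubic_coeff_deriv_def distrib_right distrib_left sum.distrib
      if_zero_mult mult_if_zero sum_if_zero cong: if_cong)

lemma wirt_chart_d1: "wirt j (\<lambda>w. chart_d1 w i k) w = chart_d2 w i j k"
  unfolding chart_d1_def
  by (simp add: wirt_add wirt_sum wirt_mult wirt_vec_nth)
    (simp add: chart_d2_def distrib_right distrib_left sum.distrib
      if_zero_mult mult_if_zero sum_if_zero cong: if_cong)

lemma wirt_chart_d2: "wirt l (\<lambda>w. chart_d2 w i j k) w = cubic_coeff_deriv i j l k + cubic_coeff_deriv i l j k"
  unfolding chart_d2_def
  by (simp add: wirt_add wirt_sum wirt_mult wirt_vec_nth)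
    (simp add: distrib_right distrib_left sum.distrib if_zero_mult mult_if_zero sum_if_zero cong: if_cong)

lemma holo_jacobian_chart: "holo_jacobian chart w = (\<chi> k i. chart_d1 w i k)"
  by (simp add: holo_jacobian_def wirt_chart)

lemma holo2_at_chart: "holo2_at chart w"
  by (simp add: holo2_at_def holo_jacobian_chart holo_at_chart holo_at_chart_d1)

lemma chart_0: "chart 0 = p"
  by (simp add: chart_def vec_eq_iff)

lemma chart_d1_0: "chart_d1 0 i k = e i $ k"
  by (simp add: chart_d1_def)

lemma chart_has_derivative: "(chart has_derivative (\<lambda>v. holo_jacobian chart w *v v)) (at w)"
  using has_derivative_holo_jacobian holo_at_chart by blast

lemma continuous_chart_d1: "isCont (\<lambda>w. chart_d1 w i k) w"
  using holo_at_chart_d1 holo_at_imp_differentiable differentiable_imp_continuous_within by blast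

lemma chart_local_biholomorphism:
  obtains V W where "open V" "open W" "0 \<in> V" "W \<subseteq> U" "bij_betw chart V W"
    "holo_on V chart" "holo_on W (inv_into V chart)" "\<And>w. w \<in> V \<Longrightarrow> invertible (holo_jacobian chart w)"
proof -
  have "isCont chart w" for w
    using chart_has_derivative[of w] by (rule has_derivative_continuous)
  then have S: "open (chart -` U)"
    by (intro continuous_open_vimage open_U continuous_at_imp_continuous_on) simp
  have 0: "0 \<in> chart -` U"
    using p_in_U chart_0 by simp
  have A: "continuous_on (chart -` U) (\<lambda>w. holo_jacobian chart w $ i $ j)" for i j
    unfolding holo_jacobian_chart
    by (intro continuous_at_imp_continuous_on ballI) (simp add: continuous_chart_d1)
  have inv: "invertible (holo_jacobian chart 0)"
    using frame by (simp add: holo_jacobian_chart chart_d1_0)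
  obtain V W where "open V" "open W" "0 \<in> V" "V \<subseteq> chart -` U" "bij_betw chart V W"
    "holo_on V chart" "holo_on W (inv_into V chart)" "\<And>w. w \<in> V \<Longrightarrow> invertible (holo_jacobian chart w)"
    by (rule holo_inverse_function_theorem[OF S 0 chart_has_derivative A inv]) blast
  moreover from this have "W \<subseteq> U"
    by (auto simp: bij_betw_def)
  ultimately show ?thesis
    using that by blast
qed

lemma pushed_Gamma_chart:
  "pushed_Gamma chart h i j c w
     = chart_d2 w i j c + (\<Sum>a\<in>UNIV. \<Sum>m\<in>UNIV. chart_d1 w i a * chart_d1 w j m * chern_Gamma h a m c (chart w))"
  by (simp add: pushed_Gamma_def holo_jacobian_chart wirt_chart_d1)

lemma pushed_Gamma_chart_antisym_0: "pushed_Gamma chart h i j c 0 + pushed_Gamma chart h j i c 0 = 0"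
proof -
  define P where "P i j = (\<Sum>a\<in>UNIV. \<Sum>m\<in>UNIV. e i $ a * e j $ m * chern_Gamma h a m c p)" for i j
  have B: "quad_coeff i j c = -(1/2) * P i j" for i j
    by (simp add: quad_coeff_def P_def)
  have "pushed_Gamma chart h i j c 0 = quad_coeff i j c + quad_coeff j i c + P i j" for i j
    by (simp add: pushed_Gamma_chart chart_d2_def chart_d1_0 chart_0 P_def)
  then show ?thesis
    by (simp only: B) (simp add: algebra_simps)
qed

lemma differentiable_chern_Gamma_chart: "(\<lambda>w. chern_Gamma h a m c (chart w)) differentiable (at 0)"
proof -
  have "chart differentiable (at 0)"
    using chart_has_derivative differentiable_def by blast
  then show ?thesis
    using differentiable_chain_at[of chart 0 "chern_Gamma h a m c"]
      chern_Gamma_differentiable[OF metric p_in_U] by (simp add: chart_0 o_def)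
qed

lemma differentiable_pushed_Gamma_chart: "pushed_Gamma chart h j k c differentiable (at 0)"
  unfolding pushed_Gamma_chart[abs_def]
  by (intro differentiable_add differentiable_sum ballI differentiable_mult finite
      holo_at_imp_differentiable[OF holo_at_chart_d2] holo_at_imp_differentiable[OF holo_at_chart_d1]
      differentiable_chern_Gamma_chart)

lemma wirt_pushed_Gamma_chart_0:
  "wirt i (pushed_Gamma chart h j k c) 0 = cubic_coeff_deriv j k i c + cubic_coeff_deriv j i k c
     + (\<Sum>a\<in>UNIV. \<Sum>m\<in>UNIV. chart_d2 0 j i a * e k $ m * chern_Gamma h a m c p
         + e j $ a * chart_d2 0 k i m * chern_Gamma h a m c p
         + e j $ a * e k $ m * (\<Sum>q\<in>UNIV. e i $ q * wirt q (chern_Gamma h a m c) p))"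
proof -
  have "wirt i (\<lambda>w. chern_Gamma h a m c (chart w)) 0 = (\<Sum>q\<in>UNIV. e i $ q * wirt q (chern_Gamma h a m c) p)" for a m
    using wirt_chain[of chart 0 "chern_Gamma h a m c" i, OF holo_at_chart]
      chern_Gamma_differentiable[OF metric p_in_U]
    by (simp add: chart_0 wirt_chart chart_d1_0)
  then show ?thesis
    unfolding pushed_Gamma_chart[abs_def]
    by (simp add: wirt_add wirt_sum wirt_mult holo_at_imp_differentiable[OF holo_at_chart_d2]
        holo_at_imp_differentiable[OF holo_at_chart_d1] differentiable_chern_Gamma_chart
        wirt_chart_d2 wirt_chart_d1 chart_d1_0 chart_0 distrib_right)
qed

lemma cubic_form_wirt_pushed_Gamma_chart: "cubic_form (\<lambda>i j k. wirt i (pushed_Gamma chart h j k c) 0) X = 0"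
proof -
  define BG where "BG i j k = (\<Sum>a\<in>UNIV. \<Sum>m\<in>UNIV. quad_coeff i j a * e k $ m * chern_Gamma h a m c p)" for i j k
  define GB where "GB i j k = (\<Sum>a\<in>UNIV. \<Sum>m\<in>UNIV. e k $ a * quad_coeff i j m * chern_Gamma h a m c p)" for i j k
  define dG where "dG i j k = (\<Sum>a\<in>UNIV. \<Sum>b\<in>UNIV. \<Sum>q\<in>UNIV.
      e i $ a * e j $ b * e k $ q * wirt q (chern_Gamma h a b c) p)" for i j k
  define C where "C i j k = cubic_coeff i j k c" for i j k
  have C: "C i j k = -(1/6) * (2 * BG i j k + 2 * GB i j k + dG i j k)" for i j k
    by (simp add: C_def cubic_coeff_def BG_def GB_def dG_def distrib_right sum.distrib sum_distrib_left mult.assoc)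
  have "wirt i (pushed_Gamma chart h j k c) 0
      = (C j k i + C k j i + C k i j) + (C j i k + C i j k + C i k j)
        + (BG j i k + BG i j k) + (GB k i j + GB i k j) + dG j k i" for i j k
    unfolding wirt_pushed_Gamma_chart_0 cubic_coeff_deriv_def C_def BG_def GB_def dG_def chart_d2_def
    by (simp add: distrib_right distrib_left sum.distrib sum_distrib_left mult.assoc)
  then have "cubic_form (\<lambda>i j k. wirt i (pushed_Gamma chart h j k c) 0) X
      = 6 * cubic_form C X + 2 * cubic_form BG X + 2 * cubic_form GB X + cubic_form dG X"
    by (simp add: cubic_form_add cubic_form_rotate[of C] cubic_form_swap13[of C] cubic_form_rotate'[of C]
        cubic_form_swap12[of C] cubic_form_swap23[of C] cubic_form_swap12[of BG]
        cubic_form_rotate'[of GB] cubic_form_swap23[of GB] cubic_form_rotate[of dG])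
  also have "\<dots> = 0"
    unfolding C cubic_form_cmult cubic_form_add by (simp add: field_simps)
  finally show ?thesis .
qed

end

theorem lemma5p2:
  fixes U :: "(complex^'n::finite) set"
    and h :: "complex^'n \<Rightarrow> complex^'n^'n"
    and p :: "complex^'n"
    and e :: "'n \<Rightarrow> complex^'n"
  assumes "open U" and "p \<in> U"
    and "hermitian_metric_on U h"
    and "invertible (\<chi> k i. e i $ k)"
  shows "\<exists>V W F. open V \<and> open W \<and> 0 \<in> V \<and> W \<subseteq> U \<and> bij_betw F V W
           \<and> holo_on V F \<and> holo_on W (inv_into V F) \<and> F 0 = p
           \<and> (\<forall>i k. wirt i (\<lambda>w. F w $ k) 0 = e i $ k)
           \<and> (\<forall>i j k. chern_Gamma_tilde (pullback_metric F h) i j k 0 = 0)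
           \<and> (\<forall>l (X::complex^'n).
                (\<Sum>i\<in>UNIV. \<Sum>j\<in>UNIV. \<Sum>k\<in>UNIV. wirt i (chern_Gamma_tilde (pullback_metric F h) j k l) 0
                                * X $ i * X $ j * X $ k) = 0
              \<and> (\<Sum>i\<in>UNIV. \<Sum>j\<in>UNIV. \<Sum>k\<in>UNIV. wirt i (chern_Gamma (pullback_metric F h) j k l) 0
                                * X $ i * X $ j * X $ k) = 0)"
proof -
  interpret hermitian_chart U h p e
    using assms by unfold_locales
  obtain V W where VW: "open V" "open W" "0 \<in> V" "W \<subseteq> U" "bij_betw chart V W"
    "holo_on V chart" "holo_on W (inv_into V chart)"
    and inv: "\<And>w. w \<in> V \<Longrightarrow> invertible (holo_jacobian chart w)"
    by (rule chart_local_biholomorphism) blast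
  have reg: "chart w \<in> U \<and> holo2_at chart w \<and> invertible (holo_jacobian chart w)" if "w \<in> V" for w
    using that VW(4,5) inv holo2_at_chart by (auto simp: bij_betw_def)
  have "chern_Gamma_tilde (pullback_metric chart h) i j k 0 = 0" for i j k
    using reg[OF VW(3)] by (intro chern_Gamma_tilde_pullback_eq_0[OF metric] pushed_Gamma_chart_antisym_0) auto
  moreover have "cubic_form (\<lambda>i j k. wirt i (chern_Gamma (pullback_metric chart h) j k l) 0) X = 0"
    and "cubic_form (\<lambda>i j k. wirt i (chern_Gamma_tilde (pullback_metric chart h) j k l) 0) X = 0" for l X
    using cubic_form_wirt_chern_Gamma_pullback[OF metric VW(1,3) reg differentiable_pushed_Gamma_chart
        pushed_Gamma_chart_antisym_0 cubic_form_wirt_pushed_Gamma_chart] by simp_all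
  ultimately show ?thesis
    using VW chart_0 by (intro exI[of _ V] exI[of _ W] exI[of _ chart])
      (auto simp: cubic_form_def wirt_chart chart_d1_0)
qed

end
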